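(* For every semistandard hook-valued tableau $T$, the tableau $\mathcal{V}_b(T)$ obtained by applying the uncrowding bumping to $T$ is again a semistandard hook-valued tableau.
   Context: French notation: row $1$ is the bottom row, rows are numbered upward, columns from left to right; cell $(r,c)$ lies in row $r$ and column $c$. A semistandard tableau of hook shape $U$ consists of a hook entry $x$ (the corner box), a leg $\ell_1<\dots<\ell_p$ stacked above $x$ with $x<\ell_1$, and an arm $a_1\le\dots\le a_q$ to the right of $x$ with $x\le a_1$ ($p,q\ge 0$, positive integer entries); write $\mathsf H(U)=x$, $\mathsf L(U)=(\ell_1,\dots,\ell_p)$, $\mathsf L^+(U)=(x,\ell_1,\dots,\ell_p)$ (extended leg), $\mathsf A(U)=(a_1,\dots,a_q)$. A (semistandard) hook-valued tableau (HVT) of partition shape $\lambda$ is a filling of the cells of the Young diagram of $\lambda$ by such hook tableaux such that $\max(A)\le\min(B)$ whenever the cell containing $A$ is in the same row and left of the cell containing $B$, and $\max(A)<\min(C)$ whenever the cell containing $A$ is in the same column and below the cell containing $C$. For a cell $(r,c)$ of $T$ write $\mathsf H_T(r,c),\mathsf L_T(r,c),\mathsf L^+_T(r,c),\mathsf A_T(r,c)$. The arm excess of $T$ is the total number of arm entries over all cells. Uncrowding bumping $\mathcal V_b$: if $T$ has arm excess $0$, $\mathcal V_b(T)=T$. Otherwise let $c$ be the largest index of a column containing a cell with nonempty arm; among the cells of column $c$ with nonempty arm let $(r,c)$ be the one whose arm contains the largest value (the topmost such cell). Let $a$ be the largest (rightmost) arm entry of $(r,c)$, $\ell$ the largest leg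 entry of $(r,c)$, and let $(a,\ell]\cap\mathsf L_T(r,c)$ denote the set of leg entries $x$ of $(r,c)$ with $a<x\le \ell$ (empty if the leg is empty). In column $c+1$ find the smallest entry (among all entries of all cells of column $c+1$) that is $\ge a$. If none exists, attach a new empty cell on top of column $c+1$, let $\tilde r$ be its row and let $k$ be the empty character; otherwise let $k$ be this entry and $(\tilde r,c+1)$ the cell containing it. (a) If $\tilde r\ne r$: remove $a$ from $\mathsf A_T(r,c)$, put $a$ in the position of $k$ in cell $(\tilde r,c+1)$ (if the cell is new, $a$ becomes its hook entry), and append $k$ (if nonempty) to the arm of $(\tilde r,c+1)$. (b) If $\tilde r=r$: remove the entries $(a,\ell]\cap\mathsf L_T(r,c)$ from the leg of $(r,c)$ and remove $a$ from the arm of $(r,c)$, insert these leg entries into the leg of $(r,c+1)$, replace the hook entry of $(r,c+1)$ by $a$, and append $k$ (if nonempty) to the arm of $(r,c+1)$. The resulting tableau is $\mathcal V_b(T)$. *)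

theory Defs
  imports Main
begin

text \<open>French notation; cells are pairs (row, column), both numbered from 1.\<close>

datatype hook = Hook (hook_x: nat) (hook_leg: "nat list") (hook_arm: "nat list")

type_synonym hvt = "nat \<times> nat \<Rightarrow> hook option"

definition hook_entries :: "hook \<Rightarrow> nat list" where
  "hook_entries U = hook_x U # hook_leg U @ hook_arm U"

definition ss_hook :: "hook \<Rightarrow> bool" where
  "ss_hook U \<longleftrightarrow> 0 < hook_x U \<and> sorted_wrt (<) (hook_x U # hook_leg U)
     \<and> sorted (hook_x U # hook_arm U)"

definition hmax :: "hook \<Rightarrow> nat" where "hmax U = Max (set (hook_entries U))"
definition hmin :: "hook \<Rightarrow> nat" where "hmin U = Min (set (hook_entries U))"

definition is_partition :: "nat list \<Rightarrow> bool" where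
  "is_partition la \<longleftrightarrow> sorted_wrt (\<ge>) la \<and> (\<forall>x\<in>set la. 0 < x)"

definition young_diagram :: "nat list \<Rightarrow> (nat \<times> nat) set" where
  "young_diagram la = {(r, c). 1 \<le> r \<and> r \<le> length la \<and> 1 \<le> c \<and> c \<le> la ! (r - 1)}"

definition is_HVT_shape :: "nat list \<Rightarrow> hvt \<Rightarrow> bool" where
  "is_HVT_shape la T \<longleftrightarrow> is_partition la \<and> dom T = young_diagram la
     \<and> (\<forall>U\<in>ran T. ss_hook U)
     \<and> (\<forall>r c c' A B. T (r, c) = Some A \<longrightarrow> T (r, c') = Some B \<longrightarrow> c < c' \<longrightarrow> hmax A \<le> hmin B)
     \<and> (\<forall>r r' c A C. T (r, c) = Some A \<longrightarrow> T (r', c) = Some C \<longrightarrow> r < r' \<longrightarrow> hmax A < hmin C)"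

definition is_HVT :: "hvt \<Rightarrow> bool" where
  "is_HVT T \<longleftrightarrow> (\<exists>la. is_HVT_shape la T)"

definition arm_excess :: "hvt \<Rightarrow> nat" where
  "arm_excess T = (\<Sum>p\<in>dom T. length (hook_arm (the (T p))))"

definition has_arm :: "hvt \<Rightarrow> nat \<Rightarrow> nat \<Rightarrow> bool" where
  "has_arm T r c \<longleftrightarrow> (\<exists>U. T (r, c) = Some U \<and> hook_arm U \<noteq> [])"

definition arm_top :: "hvt \<Rightarrow> nat \<Rightarrow> nat \<Rightarrow> nat" where
  "arm_top T r c = last (hook_arm (the (T (r, c))))"

definition bump_col :: "hvt \<Rightarrow> nat" where
  "bump_col T = (GREATEST c. \<exists>r. has_arm T r c)"

definition bump_row :: "hvt \<Rightarrow> nat \<Rightarrow> nat" where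
  "bump_row T c = (GREATEST r. has_arm T r c \<and>
      (\<forall>r'. has_arm T r' c \<longrightarrow> arm_top T r' c \<le> arm_top T r c))"

definition replace_and_append :: "nat \<Rightarrow> nat \<Rightarrow> hook \<Rightarrow> hook" where
  "replace_and_append k a V =
     (if hook_x V = k then Hook a (hook_leg V) (hook_arm V @ [k])
      else if k \<in> set (hook_leg V)
        then Hook (hook_x V) (map (\<lambda>y. if y = k then a else y) (hook_leg V)) (hook_arm V @ [k])
        else Hook (hook_x V) (hook_leg V) (map (\<lambda>y. if y = k then a else y) (hook_arm V) @ [k]))"

definition uncrowd_bump :: "hvt \<Rightarrow> hvt" where
  "uncrowd_bump T =
    (if arm_excess T = 0 then T else
     (let c = bump_col T; r = bump_row T c; U = the (T (r, c));
          a = last (hook_arm U); l = last (hook_leg U);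
          moved = filter (\<lambda>x. a < x \<and> x \<le> l) (hook_leg U);
          U_a = Hook (hook_x U) (hook_leg U) (butlast (hook_arm U));
          U_b = Hook (hook_x U) (filter (\<lambda>x. \<not> (a < x \<and> x \<le> l)) (hook_leg U)) (butlast (hook_arm U));
          S = {v. \<exists>r' V. T (r', Suc c) = Some V \<and> v \<in> set (hook_entries V) \<and> a \<le> v}
      in if S = {} then
           (let rt = card {r'. (r', Suc c) \<in> dom T} + 1 in
            if rt \<noteq> r then T((r, c) := Some U_a, (rt, Suc c) := Some (Hook a [] []))
            else T((r, c) := Some U_b, (r, Suc c) := Some (Hook a (sort moved) [])))
         else
           (let k = Min S;
                rt = (SOME r'. \<exists>V. T (r', Suc c) = Some V \<and> k \<in> set (hook_entries V));
                V = the (T (rt, Suc c))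
            in if rt \<noteq> r then T((r, c) := Some U_a, (rt, Suc c) := Some (replace_and_append k a V))
               else T((r, c) := Some U_b,
                      (r, Suc c) := Some (Hook a (sort (hook_leg V @ moved)) (hook_arm V @ [k]))))))"

end

theory Submission
  imports Defs
begin

text \<open>
  Let \<open>a\<close> be the largest arm entry of the bumped cell \<open>(r, c)\<close>, and let the target cell
  \<open>(rt, c + 1)\<close> hold the smallest entry \<open>k \<ge> a\<close> of column \<open>c + 1\<close> (or be a new cell on top
  of that column). A value \<open>x\<close> may be placed in a cell exactly when it dominates the entries to
  the left of and below that cell, a condition closed upwards in \<open>x\<close>, and is dominated by the
  entries to the right and above, a condition closed downwards. All values entering the target
  cell lie between \<open>a\<close> and \<open>k\<close>. The lower condition holds for \<open>a\<close>: since \<open>rt \<le> r\<close>, the cells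
  left of the target lie weakly south-west of \<open>(r, c)\<close> and so hold entries at most the hook
  entry of \<open>(r, c)\<close> (the entries left in \<open>(r, c)\<close> itself are at most \<open>a\<close>), and the entries of
  column \<open>c + 1\<close> below row \<open>rt\<close> are smaller than \<open>a\<close> by the minimality of \<open>k\<close>. The upper
  condition holds for \<open>k\<close> because \<open>k\<close> already sits in the target cell, and vacuously for a new
  cell.
\<close>

definition entry_set :: "hook \<Rightarrow> nat set" where
  "entry_set U = set (hook_entries U)"

lemma entry_set_eq: "entry_set U = insert (hook_x U) (set (hook_leg U) \<union> set (hook_arm U))"
  by (auto simp: entry_set_def hook_entries_def)

lemma hook_x_in_entry_set [simp]: "hook_x U \<in> entry_set U"
  by (simp add: entry_set_eq)

lemma finite_entry_set [simp]: "finite (entry_set U)"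
  by (simp add: entry_set_def)

lemma entry_set_nonempty [simp]: "entry_set U \<noteq> {}"
  using hook_x_in_entry_set by blast

lemma hmax_le_hmin_iff: "hmax A \<le> hmin B \<longleftrightarrow> (\<forall>x\<in>entry_set A. \<forall>y\<in>entry_set B. x \<le> y)"
  unfolding hmax_def hmin_def entry_set_def[symmetric] by (auto simp: Max_le_iff Min_ge_iff)

lemma hmax_less_hmin_iff: "hmax A < hmin B \<longleftrightarrow> (\<forall>x\<in>entry_set A. \<forall>y\<in>entry_set B. x < y)"
  unfolding hmax_def hmin_def entry_set_def[symmetric] by (auto simp: Max_less_iff Min_gr_iff)

definition in_order :: "nat \<times> nat \<Rightarrow> nat \<Rightarrow> nat \<times> nat \<Rightarrow> nat \<Rightarrow> bool" where
  "in_order p x q y \<longleftrightarrow>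
     (fst p = fst q \<and> snd p < snd q \<longrightarrow> x \<le> y) \<and> (snd p = snd q \<and> fst p < fst q \<longrightarrow> x < y)"

lemma in_order_same_cell [simp]: "in_order p x p y"
  by (simp add: in_order_def)

definition hvt_ordered :: "hvt \<Rightarrow> bool" where
  "hvt_ordered T \<longleftrightarrow> (\<forall>p q A B x y. T p = Some A \<longrightarrow> T q = Some B \<longrightarrow>
     x \<in> entry_set A \<longrightarrow> y \<in> entry_set B \<longrightarrow> in_order p x q y)"

lemma hvt_orderedD:
  "hvt_ordered T \<Longrightarrow> T p = Some A \<Longrightarrow> T q = Some B \<Longrightarrow> x \<in> entry_set A \<Longrightarrow> y \<in> entry_set B
    \<Longrightarrow> in_order p x q y"
  unfolding hvt_ordered_def by blast

lemma hvt_ordered_iff: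
  "hvt_ordered T \<longleftrightarrow>
   (\<forall>r c c' A B. T (r, c) = Some A \<longrightarrow> T (r, c') = Some B \<longrightarrow> c < c' \<longrightarrow> hmax A \<le> hmin B)
   \<and> (\<forall>r r' c A C. T (r, c) = Some A \<longrightarrow> T (r', c) = Some C \<longrightarrow> r < r' \<longrightarrow> hmax A < hmin C)"
  unfolding hmax_le_hmin_iff hmax_less_hmin_iff
proof (intro iffI conjI allI impI ballI)
  fix i j j' A B x y
  assume "hvt_ordered T" "T (i, j) = Some A" "T (i, j') = Some B" "j < j'"
    "x \<in> entry_set A" "y \<in> entry_set B"
  then show "x \<le> y"
    using hvt_orderedD[of T "(i, j)" A "(i, j')" B x y] by (simp add: in_order_def)
next
  fix i i' j A B x y
  assume "hvt_ordered T" "T (i, j) = Some A" "T (i', j) = Some B" "i < i'"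
    "x \<in> entry_set A" "y \<in> entry_set B"
  then show "x < y"
    using hvt_orderedD[of T "(i, j)" A "(i', j)" B x y] by (simp add: in_order_def)
next
  assume rows_columns: "(\<forall>r c c' A B. T (r, c) = Some A \<longrightarrow> T (r, c') = Some B \<longrightarrow> c < c' \<longrightarrow>
      (\<forall>x\<in>entry_set A. \<forall>y\<in>entry_set B. x \<le> y)) \<and>
    (\<forall>r r' c A C. T (r, c) = Some A \<longrightarrow> T (r', c) = Some C \<longrightarrow> r < r' \<longrightarrow>
      (\<forall>x\<in>entry_set A. \<forall>y\<in>entry_set C. x < y))"
  note rows = rows_columns[THEN conjunct1, rule_format]
    and columns = rows_columns[THEN conjunct2, rule_format]
  show "hvt_ordered T"
    unfolding hvt_ordered_def
  proof (intro allI impI)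
    fix p q A B x y
    assume "T p = Some A" "T q = Some B" "x \<in> entry_set A" "y \<in> entry_set B"
    then show "in_order p x q y"
      using rows[of "fst p" "snd p" A "snd q" B x y] columns[of "fst p" "snd p" A "fst q" B x y]
      unfolding in_order_def by (cases p; cases q) auto
  qed
qed

lemma is_HVT_shape_iff:
  "is_HVT_shape la T \<longleftrightarrow> is_partition la \<and> dom T = young_diagram la
     \<and> (\<forall>p U. T p = Some U \<longrightarrow> ss_hook U) \<and> hvt_ordered T"
proof -
  have "(\<forall>U\<in>ran T. ss_hook U) \<longleftrightarrow> (\<forall>p U. T p = Some U \<longrightarrow> ss_hook U)"
    unfolding ran_def by blast
  then show ?thesis
    unfolding is_HVT_shape_def hvt_ordered_iff by simp
qed

definition fits_left_below :: "hvt \<Rightarrow> nat \<times> nat \<Rightarrow> nat \<Rightarrow> bool" where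
  "fits_left_below T p x \<longleftrightarrow> (\<forall>q B y. T q = Some B \<longrightarrow> y \<in> entry_set B \<longrightarrow> in_order q y p x)"

definition fits_right_above :: "hvt \<Rightarrow> nat \<times> nat \<Rightarrow> nat \<Rightarrow> bool" where
  "fits_right_above T p x \<longleftrightarrow> (\<forall>q B y. T q = Some B \<longrightarrow> y \<in> entry_set B \<longrightarrow> in_order p x q y)"

lemma hvt_ordered_fits:
  assumes "hvt_ordered T" "T p = Some A" "x \<in> entry_set A"
  shows "fits_left_below T p x" and "fits_right_above T p x"
  using assms unfolding fits_left_below_def fits_right_above_def hvt_ordered_def by blast+

lemma fits_right_above_antimono: "fits_right_above T p x' \<Longrightarrow> x \<le> x' \<Longrightarrow> fits_right_above T p x"
  unfolding fits_right_above_def in_order_def by fastforce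

lemma in_order_cell_left: "snd q < snd p \<Longrightarrow> in_order p x q y"
  by (simp add: in_order_def)

lemma fits_right_above_update_left:
  assumes "snd q < snd p" "fits_right_above T p x"
  shows "fits_right_above (T(q := X)) p x"
  using assms in_order_cell_left[OF assms(1)] unfolding fits_right_above_def
  by (metis fun_upd_apply)

lemma hvt_ordered_put:
  assumes "hvt_ordered T"
    and "\<And>x. x \<in> entry_set N \<Longrightarrow> fits_left_below T p x \<and> fits_right_above T p x"
  shows "hvt_ordered (T(p := Some N))"
  unfolding hvt_ordered_def
proof (intro allI impI)
  fix p1 q1 A B x y
  assume cells: "(T(p := Some N)) p1 = Some A" "(T(p := Some N)) q1 = Some B"
    and entries: "x \<in> entry_set A" "y \<in> entry_set B"
  show "in_order p1 x q1 y"
  proof (cases "p1 = p"; cases "q1 = p")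
    assume "p1 = p" "q1 \<noteq> p"
    then have "fits_right_above T p x" "T q1 = Some B"
      using cells entries(1) assms(2) by simp_all
    then show ?thesis
      using \<open>p1 = p\<close> entries(2) unfolding fits_right_above_def by blast
  next
    assume "p1 \<noteq> p" "q1 = p"
    then have "fits_left_below T p y" "T p1 = Some A"
      using cells entries(2) assms(2) by simp_all
    then show ?thesis
      using \<open>q1 = p\<close> entries(1) unfolding fits_left_below_def by blast
  next
    assume "p1 \<noteq> p" "q1 \<noteq> p"
    then show ?thesis
      using cells entries hvt_orderedD[OF assms(1)] by auto
  qed simp
qed

lemma hvt_ordered_shrink:
  assumes "hvt_ordered T" "T p = Some U" "entry_set U' \<subseteq> entry_set U"
  shows "hvt_ordered (T(p := Some U'))"
  using assms by (intro hvt_ordered_put) (auto intro: hvt_ordered_fits)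

lemma is_HVT_put:
  assumes "is_partition la" "insert p (dom T) = young_diagram la"
    and "\<And>q B. T q = Some B \<Longrightarrow> ss_hook B" "hvt_ordered T" "ss_hook N"
    and "\<And>x. x \<in> entry_set N \<Longrightarrow> fits_left_below T p x \<and> fits_right_above T p x"
  shows "is_HVT (T(p := Some N))"
proof -
  have "is_HVT_shape la (T(p := Some N))"
    unfolding is_HVT_shape_iff using assms hvt_ordered_put[of T N p] by auto
  then show ?thesis
    unfolding is_HVT_def by blast
qed

lemma young_diagram_down_closed:
  assumes "is_partition la" "(i, j) \<in> young_diagram la" "1 \<le> i'" "i' \<le> i" "1 \<le> j'" "j' \<le> j"
  shows "(i', j') \<in> young_diagram la"
proof -
  have "la ! (i - 1) \<le> la ! (i' - 1)"
  proof (cases "i' = i")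
    case False
    then show ?thesis
      using assms sorted_wrt_nth_less[of "(\<ge>)" la "i' - 1" "i - 1"]
      unfolding is_partition_def young_diagram_def by auto
  qed simp
  then show ?thesis
    using assms unfolding young_diagram_def by auto
qed

lemma young_diagram_cell_pos: "(i, j) \<in> young_diagram la \<Longrightarrow> 1 \<le> i \<and> 1 \<le> j"
  by (simp add: young_diagram_def)

lemma young_diagram_bounded:
  assumes "(i, j) \<in> young_diagram la"
  shows "i \<le> length la" and "j \<le> sum_list la"
proof -
  have "1 \<le> i" "i \<le> length la" "j \<le> la ! (i - 1)"
    using assms unfolding young_diagram_def by auto
  moreover have "la ! (i - 1) \<le> sum_list la"
    using calculation by (intro elem_le_sum_list) simp
  ultimately show "i \<le> length la" "j \<le> sum_list la"
    by simp_all
qed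

lemma finite_young_diagram: "finite (young_diagram la)"
proof (rule finite_subset)
  show "young_diagram la \<subseteq> {..length la} \<times> {..sum_list la}"
  proof (rule subrelI)
    show "(i, j) \<in> {..length la} \<times> {..sum_list la}" if "(i, j) \<in> young_diagram la" for i j
      using young_diagram_bounded[OF that] by simp
  qed
qed simp

lemma young_diagram_column:
  assumes "is_partition la"
  shows "{i. (i, j) \<in> young_diagram la} = {1..card {i. (i, j) \<in> young_diagram la}}"
    (is "?C = _")
proof (cases "?C = {}")
  case False
  have "finite ?C"
    by (rule finite_subset[of _ "{..length la}"]) (auto dest: young_diagram_bounded)
  then have top: "(Max ?C, j) \<in> young_diagram la" and below_top: "i \<in> ?C \<Longrightarrow> i \<le> Max ?C" for i
    using Max_in[of ?C] False by simp_all
  have "?C = {1..Max ?C}"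
  proof (intro set_eqI iffI)
    show "i \<in> {1..Max ?C}" if "i \<in> ?C" for i
      using that below_top young_diagram_cell_pos by simp
    show "i \<in> ?C" if "i \<in> {1..Max ?C}" for i
      using that young_diagram_down_closed[OF assms top] young_diagram_cell_pos[OF top] by simp
  qed
  moreover from this have "card ?C = Max ?C"
    by (metis card_atLeastAtMost diff_Suc_1)
  ultimately show ?thesis
    by metis
qed simp

lemma addable_cell_row_length:
  assumes "(i, c) \<in> young_diagram la" "(i, Suc c) \<notin> young_diagram la"
  shows "la ! (i - 1) = c"
  using assms unfolding young_diagram_def by simp

lemma is_partition_add_cell:
  assumes la: "is_partition la" and cell: "(i, c) \<in> young_diagram la"
    and column: "{i'. (i', Suc c) \<in> young_diagram la} = {1..<i}"
  shows "is_partition (la[i - 1 := Suc c])"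
proof -
  define la' where "la' = la[i - 1 := Suc c]"
  have "(i, Suc c) \<notin> young_diagram la"
    using column by (metis atLeastLessThan_iff less_irrefl mem_Collect_eq)
  then have row_length: "la ! (i - 1) = c"
    using addable_cell_row_length[OF cell] by simp
  have longer_below: "Suc c \<le> la ! i'" if "i' < i - 1" for i'
  proof -
    have "Suc i' \<in> {1..<i}"
      using that by simp
    then have "(Suc i', Suc c) \<in> young_diagram la"
      unfolding column[symmetric] by simp
    then show ?thesis
      unfolding young_diagram_def by simp
  qed
  have sorted: "sorted_wrt (\<ge>) la"
    using la unfolding is_partition_def by simp
  have "la' ! j \<le> la' ! j'" if "j' < j" "j < length la'" for j j'
  proof -
    consider "j = i - 1" | "j' = i - 1" | "j \<noteq> i - 1" "j' \<noteq> i - 1"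
      by blast
    then show ?thesis
    proof cases
      case 1
      then show ?thesis
        using that longer_below[of j'] unfolding la'_def by simp
    next
      case 2
      then show ?thesis
        using that sorted_wrt_nth_less[OF sorted, of j' j] row_length unfolding la'_def by simp
    next
      case 3
      then show ?thesis
        using that sorted_wrt_nth_less[OF sorted, of j' j] unfolding la'_def by simp
    qed
  qed
  then have "sorted_wrt (\<ge>) la'"
    unfolding sorted_wrt_iff_nth_less by blast
  moreover have "\<forall>x\<in>set la'. 0 < x"
    using la set_update_subset_insert[of la "i - 1" "Suc c"] unfolding is_partition_def la'_def by auto
  ultimately show ?thesis
    unfolding is_partition_def la'_def by simp
qed

lemma young_diagram_add_cell:
  assumes cell: "(i, c) \<in> young_diagram la" and new: "(i, Suc c) \<notin> young_diagram la"
  shows "young_diagram (la[i - 1 := Suc c]) = insert (i, Suc c) (young_diagram la)"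
proof (intro set_eqI)
  fix z :: "nat \<times> nat"
  obtain i' j where z: "z = (i', j)"
    by fastforce
  have i: "1 \<le> i" "i \<le> length la"
    using cell unfolding young_diagram_def by auto
  then have row_lengths: "la[i - 1 := Suc c] ! (i' - 1) = (if i' = i then Suc c else la ! (i' - 1))"
    if "1 \<le> i'"
    using that by (auto simp: nth_list_update)
  show "z \<in> young_diagram (la[i - 1 := Suc c]) \<longleftrightarrow> z \<in> insert (i, Suc c) (young_diagram la)"
    using row_lengths i addable_cell_row_length[OF cell new] unfolding z young_diagram_def
    by (cases "i' = i") auto
qed

lemma fits_right_above_outside:
  assumes la: "is_partition la" and dom: "dom T = young_diagram la"
    and outside: "(i, j) \<notin> dom T" and pos: "1 \<le> i" "1 \<le> j"
  shows "fits_right_above T (i, j) x"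
  unfolding fits_right_above_def
proof (intro allI impI)
  fix q B y
  assume "T q = Some B"
  then have "q \<in> young_diagram la"
    using dom by blast
  then have "\<not> (i \<le> fst q \<and> j \<le> snd q)"
    using young_diagram_down_closed[OF la, of "fst q" "snd q" i j] outside pos dom by auto
  then show "in_order (i, j) x q y"
    unfolding in_order_def by auto
qed

lemma entry_le_hook_x_northeast:
  assumes T: "is_HVT_shape la T" and cells: "T (i, j) = Some B" "T (i', j') = Some C"
    and northeast: "i \<le> i'" "j \<le> j'" "(i, j) \<noteq> (i', j')"
    and y: "y \<in> entry_set B"
  shows "y \<le> hook_x C"
proof -
  have la: "is_partition la" and dom: "dom T = young_diagram la" and ordered: "hvt_ordered T"
    using T unfolding is_HVT_shape_iff by simp_all
  consider "i = i'" | "i < i'" "j = j'" | "i < i'" "j < j'"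
    using northeast by fastforce
  then show ?thesis
  proof cases
    case 1
    then show ?thesis
      using hvt_orderedD[OF ordered cells y hook_x_in_entry_set] northeast
      by (simp add: in_order_def)
  next
    case 2
    then show ?thesis
      using hvt_orderedD[OF ordered cells y hook_x_in_entry_set] by (simp add: in_order_def)
  next
    case 3
    have "(i, j') \<in> young_diagram la"
      using young_diagram_down_closed[OF la, of i' j' i j'] young_diagram_cell_pos[of i j la]
        cells dom 3 by auto
    then obtain D where D: "T (i, j') = Some D"
      using dom by auto
    have "y \<le> hook_x D"
      using hvt_orderedD[OF ordered cells(1) D y hook_x_in_entry_set] 3 by (simp add: in_order_def)
    moreover have "hook_x D < hook_x C"
      using hvt_orderedD[OF ordered D cells(2) hook_x_in_entry_set hook_x_in_entry_set] 3
      by (simp add: in_order_def)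
    ultimately show ?thesis
      by simp
  qed
qed

lemma ss_hook_entry_ge_hook_x: "ss_hook V \<Longrightarrow> y \<in> entry_set V \<Longrightarrow> hook_x V \<le> y"
  by (auto simp: ss_hook_def entry_set_eq)

lemma sorted_le_last: "sorted (xs :: nat list) \<Longrightarrow> y \<in> set xs \<Longrightarrow> y \<le> last xs"
  by (induction xs) (auto simp: last_ConsR dest: last_in_set[of "tl _"])

lemma ss_hook_filter_leg_butlast_arm:
  assumes "ss_hook U"
  shows "ss_hook (Hook (hook_x U) (filter P (hook_leg U)) (butlast (hook_arm U)))"
proof -
  have "sorted (hook_x U # hook_arm U)"
    using assms unfolding ss_hook_def by simp
  then have "sorted (butlast (hook_x U # hook_arm U))"
    by (rule sorted_butlast)
  then have "sorted (hook_x U # butlast (hook_arm U))"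
    by (cases "hook_arm U") auto
  moreover have "sorted_wrt (<) (hook_x U # filter P (hook_leg U))"
    using assms unfolding ss_hook_def by (auto intro: sorted_wrt_filter)
  ultimately show ?thesis
    using assms unfolding ss_hook_def by simp
qed

lemma sorted_wrt_map_replace:
  fixes xs :: "nat list"
  assumes "sorted_wrt (<) xs" "a \<le> k" "\<forall>y\<in>set xs. y < k \<longrightarrow> y < a"
  shows "sorted_wrt (<) (map (\<lambda>y. if y = k then a else y) xs)"
  unfolding sorted_wrt_map
  by (rule sorted_wrt_mono_rel[OF _ assms(1)]) (use assms(2,3) in auto)

lemma
  assumes ss: "ss_hook V" and arm: "hook_arm V = []" and k: "k \<in> entry_set V" and a: "0 < a" "a \<le> k"
    and gap: "\<forall>y\<in>entry_set V. y < k \<longrightarrow> y < a"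
  shows ss_hook_replace_and_append: "ss_hook (replace_and_append k a V)"
    and entry_set_replace_and_append: "entry_set (replace_and_append k a V) \<subseteq> insert a (entry_set V)"
proof -
  obtain x leg where V: "V = Hook x leg []"
    using arm by (cases V) auto
  have leg: "sorted_wrt (<) (x # leg)"
    using ss unfolding V ss_hook_def by simp
  show "ss_hook (replace_and_append k a V)"
  proof (cases "x = k")
    case True
    then show ?thesis
      using leg a ss unfolding V replace_and_append_def ss_hook_def by auto
  next
    case False
    then have "k \<in> set leg"
      using k unfolding V by (simp add: entry_set_eq)
    moreover have "sorted_wrt (<) (map (\<lambda>y. if y = k then a else y) (x # leg))"
      by (rule sorted_wrt_map_replace[OF leg a(2)]) (use gap in \<open>auto simp: V entry_set_eq\<close>)
    ultimately show ?thesis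
      using False leg ss unfolding V replace_and_append_def ss_hook_def by auto
  qed
  show "entry_set (replace_and_append k a V) \<subseteq> insert a (entry_set V)"
    using k unfolding V replace_and_append_def by (auto simp: entry_set_eq)
qed

lemma ss_hook_merge_leg:
  assumes ss: "ss_hook (Hook x leg [])" and a: "0 < a" "a \<le> x"
    and mv: "sorted_wrt (<) mv" "\<forall>m\<in>set mv. a < m \<and> m \<le> x"
  shows "ss_hook (Hook a (sort (leg @ mv)) [x])"
proof -
  have leg: "sorted_wrt (<) (x # leg)"
    using ss unfolding ss_hook_def by simp
  have "distinct (leg @ mv)"
    using leg mv by (force simp: strict_sorted_iff)
  then have "sorted_wrt (<) (sort (leg @ mv))"
    by (simp add: strict_sorted_iff)
  moreover have "\<forall>y\<in>set (leg @ mv). a < y"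
    using leg mv a by force
  ultimately show ?thesis
    using a unfolding ss_hook_def by simp
qed

definition bump_at :: "hvt \<Rightarrow> nat \<Rightarrow> nat \<Rightarrow> hvt" where
  "bump_at T r c =
    (let U = the (T (r, c));
         a = last (hook_arm U); l = last (hook_leg U);
         moved = filter (\<lambda>x. a < x \<and> x \<le> l) (hook_leg U);
         U_a = Hook (hook_x U) (hook_leg U) (butlast (hook_arm U));
         U_b = Hook (hook_x U) (filter (\<lambda>x. \<not> (a < x \<and> x \<le> l)) (hook_leg U)) (butlast (hook_arm U));
         S = {v. \<exists>r' V. T (r', Suc c) = Some V \<and> v \<in> set (hook_entries V) \<and> a \<le> v}
     in if S = {} then
          (let rt = card {r'. (r', Suc c) \<in> dom T} + 1 in
           if rt \<noteq> r then T((r, c) := Some U_a, (rt, Suc c) := Some (Hook a [] []))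
           else T((r, c) := Some U_b, (r, Suc c) := Some (Hook a (sort moved) [])))
        else
          (let k = Min S;
               rt = (SOME r'. \<exists>V. T (r', Suc c) = Some V \<and> k \<in> set (hook_entries V));
               V = the (T (rt, Suc c))
           in if rt \<noteq> r then T((r, c) := Some U_a, (rt, Suc c) := Some (replace_and_append k a V))
              else T((r, c) := Some U_b,
                     (r, Suc c) := Some (Hook a (sort (hook_leg V @ moved)) (hook_arm V @ [k])))))"

lemma uncrowd_bump_eq_bump_at:
  "arm_excess T \<noteq> 0 \<Longrightarrow> uncrowd_bump T = bump_at T (bump_row T (bump_col T)) (bump_col T)"
  unfolding uncrowd_bump_def bump_at_def Let_def by (rule if_not_P)

locale armed_cell =
  fixes T :: hvt and la :: "nat list" and r c :: nat and U :: hook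
  assumes shape: "is_HVT_shape la T"
    and cell: "T (r, c) = Some U"
    and arm_nonempty: "hook_arm U \<noteq> []"
    and next_column_armless: "T (i, Suc c) = Some V \<Longrightarrow> hook_arm V = []"
begin

lemma partition: "is_partition la"
  and dom_eq: "dom T = young_diagram la"
  and ordered: "hvt_ordered T"
  using shape unfolding is_HVT_shape_iff by simp_all

lemma cell_in_diagram: "(r, c) \<in> young_diagram la"
  using cell dom_eq by blast

lemma cell_pos: "1 \<le> r" "1 \<le> c"
  using young_diagram_cell_pos[OF cell_in_diagram] by simp_all

lemma ss_cells: "T p = Some V \<Longrightarrow> ss_hook V"
  using shape unfolding is_HVT_shape_iff by blast

definition bumped :: nat where
  "bumped = last (hook_arm U)"

definition moved :: "nat list" where
  "moved = filter (\<lambda>x. bumped < x \<and> x \<le> last (hook_leg U)) (hook_leg U)"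

definition U_a :: hook where
  "U_a = Hook (hook_x U) (hook_leg U) (butlast (hook_arm U))"

definition U_b :: hook where
  "U_b = Hook (hook_x U) (filter (\<lambda>x. \<not> (bumped < x \<and> x \<le> last (hook_leg U))) (hook_leg U))
     (butlast (hook_arm U))"

definition targets :: "nat set" where
  "targets = {v. \<exists>i V. T (i, Suc c) = Some V \<and> v \<in> entry_set V \<and> bumped \<le> v}"

definition new_row :: nat where
  "new_row = card {i. (i, Suc c) \<in> dom T} + 1"

definition target :: nat where
  "target = Min targets"

definition target_row :: nat where
  "target_row = (SOME i. \<exists>V. T (i, Suc c) = Some V \<and> target \<in> entry_set V)"

lemma bump_at_unfold:
  "bump_at T r c =
    (if targets = {} then
       (if new_row \<noteq> r then T((r, c) := Some U_a, (new_row, Suc c) := Some (Hook bumped [] []))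
        else T((r, c) := Some U_b, (r, Suc c) := Some (Hook bumped (sort moved) [])))
     else
       (let V = the (T (target_row, Suc c)) in
        if target_row \<noteq> r
        then T((r, c) := Some U_a, (target_row, Suc c) := Some (replace_and_append target bumped V))
        else T((r, c) := Some U_b,
               (r, Suc c) := Some (Hook bumped (sort (hook_leg V @ moved)) (hook_arm V @ [target])))))"
  unfolding bump_at_def Let_def cell option.sel bumped_def moved_def U_a_def U_b_def targets_def
    new_row_def target_def target_row_def entry_set_def ..

lemma hook_x_le_bumped: "hook_x U \<le> bumped"
  and bumped_pos: "0 < bumped"
  and bumped_in_entry_set: "bumped \<in> entry_set U"
proof -
  have "bumped \<in> set (hook_arm U)"
    using arm_nonempty unfolding bumped_def by simp
  moreover have "ss_hook U"
    using ss_cells[OF cell] .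
  ultimately show "hook_x U \<le> bumped" "0 < bumped" "bumped \<in> entry_set U"
    unfolding ss_hook_def entry_set_eq by auto
qed

lemma ss_hook_U_a: "ss_hook U_a"
  and entry_set_U_a: "entry_set U_a \<subseteq> entry_set U"
  using ss_hook_filter_leg_butlast_arm[OF ss_cells[OF cell], of "\<lambda>_. True"]
  unfolding U_a_def by (auto simp: entry_set_eq dest: in_set_butlastD)

lemma ss_hook_U_b: "ss_hook U_b"
  and entry_set_U_b: "entry_set U_b \<subseteq> entry_set U"
  and entry_set_U_b_le_bumped: "y \<in> entry_set U_b \<Longrightarrow> y \<le> bumped"
proof -
  have ss: "ss_hook U"
    using ss_cells[OF cell] .
  then show "ss_hook U_b"
    unfolding U_b_def by (rule ss_hook_filter_leg_butlast_arm)
  show "entry_set U_b \<subseteq> entry_set U"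
    unfolding U_b_def by (auto simp: entry_set_eq dest: in_set_butlastD)
  have "sorted (hook_leg U)" "sorted (hook_arm U)"
    using ss unfolding ss_hook_def by (simp_all add: strict_sorted_iff)
  then show "y \<le> bumped" if "y \<in> entry_set U_b"
    using that hook_x_le_bumped sorted_le_last[of "hook_leg U" y] sorted_le_last[of "hook_arm U" y]
    unfolding U_b_def bumped_def entry_set_eq by (auto dest: in_set_butlastD)
qed

lemma moved_sorted: "sorted_wrt (<) moved"
  and moved_entries: "m \<in> set moved \<Longrightarrow> bumped < m \<and> m \<in> entry_set U"
  using ss_cells[OF cell] unfolding moved_def ss_hook_def
  by (auto intro: sorted_wrt_filter simp: entry_set_eq)

lemma right_neighbour_ge_bumped: "T (r, Suc c) = Some W \<Longrightarrow> y \<in> entry_set W \<Longrightarrow> bumped \<le> y"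
  using hvt_orderedD[OF ordered cell _ bumped_in_entry_set] by (simp add: in_order_def)

lemma fits_left_below_target:
  assumes "rt \<le> r" "bumped \<le> x"
    and below: "\<And>i V y. i < rt \<Longrightarrow> T (i, Suc c) = Some V \<Longrightarrow> y \<in> entry_set V \<Longrightarrow> y < bumped"
  shows "fits_left_below (T((r, c) := Some (if rt = r then U_b else U_a))) (rt, Suc c) x"
  unfolding fits_left_below_def
proof (intro allI impI)
  fix q B y
  assume q: "(T((r, c) := Some (if rt = r then U_b else U_a))) q = Some B" and y: "y \<in> entry_set B"
  obtain i j where ij: "q = (i, j)"
    by fastforce
  have "y \<le> bumped" if "i = rt" "j \<le> c"
  proof (cases "q = (r, c)")
    case True
    then show ?thesis
      using q y entry_set_U_b_le_bumped ij that by simp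
  next
    case False
    then show ?thesis
      using q y ij that assms(1) entry_le_hook_x_northeast[OF shape _ cell] hook_x_le_bumped
      by (metis fun_upd_other order.trans)
  qed
  moreover have "y < bumped" if "j = Suc c" "i < rt"
    using q y ij that below by auto
  ultimately show "in_order q y (rt, Suc c) x"
    unfolding ij in_order_def using assms(2) by auto
qed

lemma bump_update_is_HVT:
  assumes shape': "is_partition la'" "insert (rt, Suc c) (dom T) = young_diagram la'"
    and "rt \<le> r"
    and below: "\<And>i V y. i < rt \<Longrightarrow> T (i, Suc c) = Some V \<Longrightarrow> y \<in> entry_set V \<Longrightarrow> y < bumped"
    and "ss_hook N"
    and new: "\<And>x. x \<in> entry_set N \<Longrightarrow> (\<exists>V. T (rt, Suc c) = Some V \<and> x \<in> entry_set V)
      \<or> (bumped \<le> x \<and> fits_right_above T (rt, Suc c) x)"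
  shows "is_HVT (T((r, c) := Some (if rt = r then U_b else U_a), (rt, Suc c) := Some N))"
proof -
  define T' where "T' = T((r, c) := Some (if rt = r then U_b else U_a))"
  have ordered': "hvt_ordered T'"
    unfolding T'_def using hvt_ordered_shrink[OF ordered cell] entry_set_U_a entry_set_U_b by simp
  have "fits_left_below T' (rt, Suc c) x \<and> fits_right_above T' (rt, Suc c) x"
    if "x \<in> entry_set N" for x
  proof (cases "\<exists>V. T (rt, Suc c) = Some V \<and> x \<in> entry_set V")
    case True
    then show ?thesis
      using hvt_ordered_fits[OF ordered'] unfolding T'_def by auto
  next
    case False
    then have x: "bumped \<le> x" "fits_right_above T (rt, Suc c) x"
      using new[OF that] by auto
    show ?thesis
      using fits_left_below_target[OF \<open>rt \<le> r\<close> x(1) below]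
        fits_right_above_update_left[OF _ x(2), of "(r, c)"]
      unfolding T'_def by simp
  qed
  moreover have "insert (rt, Suc c) (dom T') = young_diagram la'"
    using shape'(2) cell unfolding T'_def by auto
  moreover have "ss_hook B" if "T' q = Some B" for q B
    using that ss_cells ss_hook_U_a ss_hook_U_b unfolding T'_def by (auto split: if_splits)
  ultimately show ?thesis
    using is_HVT_put[OF shape'(1) _ _ ordered' \<open>ss_hook N\<close>] unfolding T'_def by blast
qed

lemma new_row_addable:
  assumes "targets = {}"
  shows "new_row \<le> r"
    and "(new_row, Suc c) \<notin> dom T"
    and "is_partition (la[new_row - 1 := Suc c])"
    and "insert (new_row, Suc c) (dom T) = young_diagram (la[new_row - 1 := Suc c])"
proof -
  define column where "column = {i. (i, Suc c) \<in> young_diagram la}"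
  have "column = {1..card column}"
    unfolding column_def by (rule young_diagram_column[OF partition])
  moreover have "new_row = Suc (card column)"
    unfolding new_row_def column_def dom_eq by simp
  ultimately have column_eq: "column = {1..<new_row}"
    by (metis atLeastLessThanSuc_atLeastAtMost)
  have "new_row \<notin> column"
    using column_eq by simp
  then have new: "(new_row, Suc c) \<notin> young_diagram la"
    unfolding column_def by simp
  then show "(new_row, Suc c) \<notin> dom T"
    using dom_eq by simp
  have "(r, Suc c) \<notin> dom T"
  proof
    assume "(r, Suc c) \<in> dom T"
    then obtain W where "T (r, Suc c) = Some W"
      by blast
    then have "hook_x W \<in> targets"
      using right_neighbour_ge_bumped unfolding targets_def by fastforce
    then show False
      using assms by simp
  qed
  then have "r \<notin> column"
    unfolding column_def dom_eq by simp
  then show "new_row \<le> r"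
    using column_eq cell_pos by simp
  then have "(new_row, c) \<in> young_diagram la"
    using young_diagram_down_closed[OF partition cell_in_diagram, of new_row c] cell_pos
    unfolding new_row_def by simp
  then show "is_partition (la[new_row - 1 := Suc c])"
    and "insert (new_row, Suc c) (dom T) = young_diagram (la[new_row - 1 := Suc c])"
    using is_partition_add_cell[OF partition _ column_eq[unfolded column_def]]
      young_diagram_add_cell[OF _ new] dom_eq by simp_all
qed

lemma bump_at_is_HVT_new_cell:
  assumes "targets = {}"
  shows "is_HVT (bump_at T r c)"
proof -
  note rt = new_row_addable[OF assms]
  have below: "y < bumped" if "i < new_row" "T (i, Suc c) = Some V" "y \<in> entry_set V" for i V y
    using that assms unfolding targets_def by fastforce
  have "1 \<le> new_row" "1 \<le> Suc c"
    unfolding new_row_def by simp_all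
  then have right: "fits_right_above T (new_row, Suc c) x" for x
    using fits_right_above_outside[OF partition dom_eq rt(2)] by simp
  show ?thesis
  proof (cases "new_row = r")
    case True
    have "sort moved = moved"
      using moved_sorted by (simp add: strict_sorted_iff sorted_sort_id)
    then have "ss_hook (Hook bumped (sort moved) [])"
      using moved_sorted moved_entries bumped_pos unfolding ss_hook_def by auto
    moreover have "bumped \<le> x" if "x \<in> entry_set (Hook bumped (sort moved) [])" for x
      using that moved_entries by (auto simp: entry_set_eq less_imp_le)
    ultimately have "is_HVT (T((r, c) := Some (if new_row = r then U_b else U_a),
        (new_row, Suc c) := Some (Hook bumped (sort moved) [])))"
      by (intro bump_update_is_HVT[OF rt(3,4) rt(1)] below) (use right in auto)
    then show ?thesis
      using assms True unfolding bump_at_unfold by simp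
  next
    case False
    have "is_HVT (T((r, c) := Some (if new_row = r then U_b else U_a),
        (new_row, Suc c) := Some (Hook bumped [] [])))"
      using right bumped_pos
      by (intro bump_update_is_HVT[OF rt(3,4) rt(1)] below) (auto simp: entry_set_eq ss_hook_def)
    then show ?thesis
      using assms False unfolding bump_at_unfold by simp
  qed
qed

lemma finite_targets: "finite targets"
proof (rule finite_subset)
  show "targets \<subseteq> (\<Union>V\<in>ran T. entry_set V)"
    unfolding targets_def ran_def by blast
  show "finite (\<Union>V\<in>ran T. entry_set V)"
    using dom_eq finite_young_diagram by (simp add: finite_ran)
qed

lemma
  assumes "targets \<noteq> {}"
  shows target_in_targets: "target \<in> targets"
    and target_minimal: "y \<in> targets \<Longrightarrow> target \<le> y"
  unfolding target_def using finite_targets assms by simp_all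

lemma target_cell:
  assumes "targets \<noteq> {}"
  obtains V where "T (target_row, Suc c) = Some V" "target \<in> entry_set V"
proof -
  have "\<exists>i V. T (i, Suc c) = Some V \<and> target \<in> entry_set V"
    using target_in_targets[OF assms] unfolding targets_def by blast
  then have "\<exists>V. T (target_row, Suc c) = Some V \<and> target \<in> entry_set V"
    unfolding target_row_def by (rule someI_ex)
  then show thesis
    using that by blast
qed

lemma bumped_le_target: "targets \<noteq> {} \<Longrightarrow> bumped \<le> target"
  using target_in_targets unfolding targets_def by blast

lemma less_target_imp_less_bumped:
  assumes "targets \<noteq> {}" "T (i, Suc c) = Some V" "y \<in> entry_set V" "y < target"
  shows "y < bumped"
  using target_minimal[OF assms(1), of y] assms unfolding targets_def by fastforce

lemma target_row_le:
  assumes "targets \<noteq> {}"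
  shows "target_row \<le> r"
proof (rule ccontr)
  assume "\<not> target_row \<le> r"
  obtain V where V: "T (target_row, Suc c) = Some V" "target \<in> entry_set V"
    using target_cell[OF assms] .
  have "(r, Suc c) \<in> young_diagram la"
    using young_diagram_down_closed[OF partition, of target_row "Suc c" r "Suc c"] V(1) dom_eq
      cell_pos \<open>\<not> target_row \<le> r\<close> by auto
  then obtain W where W: "T (r, Suc c) = Some W"
    using dom_eq by auto
  have "hook_x W \<in> targets"
    using W right_neighbour_ge_bumped unfolding targets_def by fastforce
  then have "target \<le> hook_x W"
    by (rule target_minimal[OF assms])
  moreover have "hook_x W < target"
    using hvt_orderedD[OF ordered W V(1) hook_x_in_entry_set V(2)] \<open>\<not> target_row \<le> r\<close>
    by (simp add: in_order_def)
  ultimately show False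
    by simp
qed

lemma below_target_row:
  assumes "targets \<noteq> {}" "i < target_row" "T (i, Suc c) = Some B" "y \<in> entry_set B"
  shows "y < bumped"
proof -
  obtain V where V: "T (target_row, Suc c) = Some V" "target \<in> entry_set V"
    using target_cell[OF assms(1)] .
  have "y < target"
    using hvt_orderedD[OF ordered assms(3) V(1) assms(4) V(2)] assms(2) by (simp add: in_order_def)
  then show ?thesis
    using less_target_imp_less_bumped[OF assms(1,3,4)] by simp
qed

lemma fits_right_above_target_row:
  assumes "targets \<noteq> {}" "x \<le> target"
  shows "fits_right_above T (target_row, Suc c) x"
proof -
  obtain V where V: "T (target_row, Suc c) = Some V" "target \<in> entry_set V"
    using target_cell[OF assms(1)] .
  show ?thesis
    using fits_right_above_antimono[OF hvt_ordered_fits(2)[OF ordered V] assms(2)] .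
qed

lemma bump_at_is_HVT_other_row:
  assumes "targets \<noteq> {}" "target_row \<noteq> r"
  shows "is_HVT (bump_at T r c)"
proof -
  obtain V where V: "T (target_row, Suc c) = Some V" "target \<in> entry_set V"
    using target_cell[OF assms(1)] .
  define N where "N = replace_and_append target bumped V"
  have N: "ss_hook N" "entry_set N \<subseteq> insert bumped (entry_set V)"
    using ss_hook_replace_and_append[OF ss_cells[OF V(1)] next_column_armless[OF V(1)] V(2)
        bumped_pos bumped_le_target[OF assms(1)]]
      entry_set_replace_and_append[OF ss_cells[OF V(1)] next_column_armless[OF V(1)] V(2)
        bumped_pos bumped_le_target[OF assms(1)]]
      less_target_imp_less_bumped[OF assms(1) V(1)]
    unfolding N_def by blast+
  have "insert (target_row, Suc c) (dom T) = young_diagram la"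
    using V(1) dom_eq by auto
  then have "is_HVT (T((r, c) := Some (if target_row = r then U_b else U_a),
      (target_row, Suc c) := Some N))"
    using N(2) V(1) fits_right_above_target_row[OF assms(1) bumped_le_target[OF assms(1)]]
    by (intro bump_update_is_HVT[OF partition _ target_row_le[OF assms(1)] _ N(1)]
        below_target_row[OF assms(1)]) auto
  then show ?thesis
    using assms V(1) unfolding bump_at_unfold N_def by simp
qed

lemma bump_at_is_HVT_same_row:
  assumes "targets \<noteq> {}" "target_row = r"
  shows "is_HVT (bump_at T r c)"
proof -
  obtain V where V: "T (r, Suc c) = Some V" "target \<in> entry_set V"
    using target_cell[OF assms(1)] assms(2) by metis
  have "hook_x V \<in> targets"
    using V(1) hook_x_in_entry_set right_neighbour_ge_bumped[OF V(1) hook_x_in_entry_set]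
    unfolding targets_def by blast
  then have "target \<le> hook_x V"
    by (rule target_minimal[OF assms(1)])
  then have V_eq: "V = Hook target (hook_leg V) []"
    using ss_hook_entry_ge_hook_x[OF ss_cells[OF V(1)] V(2)] next_column_armless[OF V(1)]
    by (cases V) simp
  have moved_le: "bumped < m \<and> m \<le> target" if "m \<in> set moved" for m
    using moved_entries[OF that] hvt_orderedD[OF ordered cell V(1) _ V(2), of m]
    by (simp add: in_order_def)
  define N where "N = Hook bumped (sort (hook_leg V @ moved)) [target]"
  have "ss_hook N"
    unfolding N_def
    using ss_cells[OF V(1)] moved_sorted moved_le bumped_pos bumped_le_target[OF assms(1)]
    by (subst (asm) V_eq) (intro ss_hook_merge_leg; simp)
  moreover have "x \<in> entry_set V \<or> bumped \<le> x \<and> x \<le> target" if "x \<in> entry_set N" for x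
    using that moved_le bumped_le_target[OF assms(1)] V(2) unfolding N_def
    by (auto simp: entry_set_eq less_imp_le)
  moreover have "insert (target_row, Suc c) (dom T) = young_diagram la"
    using V(1) dom_eq assms(2) by auto
  ultimately have "is_HVT (T((r, c) := Some (if target_row = r then U_b else U_a),
      (target_row, Suc c) := Some N))"
    using V fits_right_above_target_row[OF assms(1)] assms(2)
    by (intro bump_update_is_HVT[OF partition _ target_row_le[OF assms(1)]]
        below_target_row[OF assms(1)]) auto
  then show ?thesis
    using assms V(1) next_column_armless[OF V(1)] unfolding bump_at_unfold N_def by simp
qed

theorem bump_at_is_HVT: "is_HVT (bump_at T r c)"
  using bump_at_is_HVT_new_cell bump_at_is_HVT_other_row bump_at_is_HVT_same_row by blast

end

lemma has_arm_bounded: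
  assumes "is_HVT_shape la T" "has_arm T i j"
  shows "i \<le> length la" "j \<le> sum_list la"
proof -
  obtain U where "T (i, j) = Some U"
    using assms(2) unfolding has_arm_def by blast
  then have "(i, j) \<in> young_diagram la"
    using assms(1) unfolding is_HVT_shape_iff by blast
  then show "i \<le> length la" "j \<le> sum_list la"
    by (rule young_diagram_bounded)+
qed

lemma has_arm_bump_col:
  assumes "is_HVT_shape la T" "has_arm T i j"
  shows "\<exists>i. has_arm T i (bump_col T)" and "j \<le> bump_col T"
  unfolding bump_col_def
  by (rule GreatestI_nat[of _ j "sum_list la"] Greatest_le_nat[of _ j "sum_list la"];
      use assms has_arm_bounded(2)[OF assms(1)] in blast)+

lemma has_arm_bump_row:
  assumes "is_HVT_shape la T" "has_arm T i c"
  shows "has_arm T (bump_row T c) c"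
proof -
  define R where "R = {i. has_arm T i c}"
  have "R \<subseteq> {..length la}"
    using has_arm_bounded(1)[OF assms(1)] unfolding R_def by blast
  then have "finite R"
    by (rule finite_subset) simp
  moreover have "R \<noteq> {}"
    using assms(2) unfolding R_def by blast
  ultimately have "Max ((\<lambda>i. arm_top T i c) ` R) \<in> (\<lambda>i. arm_top T i c) ` R"
    by (intro Max_in finite_imageI) auto
  then obtain k where k: "k \<in> R" "arm_top T k c = Max ((\<lambda>i. arm_top T i c) ` R)"
    by auto
  have k_max: "arm_top T i c \<le> arm_top T k c" if "i \<in> R" for i
    unfolding k(2) using \<open>finite R\<close> that by simp
  have "has_arm T (bump_row T c) c \<and>
      (\<forall>i. has_arm T i c \<longrightarrow> arm_top T i c \<le> arm_top T (bump_row T c) c)"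
    unfolding bump_row_def
    by (rule GreatestI_nat[of _ k "length la"])
      (use k(1) k_max has_arm_bounded(1)[OF assms(1)] in \<open>auto simp: R_def\<close>)
  then show ?thesis
    by blast
qed

lemma armed_cell_bump_position:
  assumes shape: "is_HVT_shape la T" and "arm_excess T \<noteq> 0"
  shows "armed_cell T la (bump_row T (bump_col T)) (bump_col T)
    (the (T (bump_row T (bump_col T), bump_col T)))"
proof -
  have "dom T = young_diagram la"
    using shape unfolding is_HVT_shape_iff by blast
  then have "\<exists>p\<in>dom T. hook_arm (the (T p)) \<noteq> []"
    using assms(2) finite_young_diagram unfolding arm_excess_def by simp
  then obtain i j where "has_arm T i j"
    unfolding has_arm_def by fastforce
  then obtain U where U: "T (bump_row T (bump_col T), bump_col T) = Some U" "hook_arm U \<noteq> []"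
    using has_arm_bump_col(1)[OF shape] has_arm_bump_row[OF shape] unfolding has_arm_def by blast
  have "hook_arm V = []" if "T (i, Suc (bump_col T)) = Some V" for i V
  proof (rule ccontr)
    assume "hook_arm V \<noteq> []"
    then have "has_arm T i (Suc (bump_col T))"
      using that unfolding has_arm_def by blast
    then show False
      using has_arm_bump_col(2)[OF shape] by fastforce
  qed
  then show ?thesis
    using shape U by unfold_locales simp_all
qed

theorem lemma3p3:
  fixes T :: hvt
  assumes "is_HVT T"
  shows "is_HVT (uncrowd_bump T)"
proof (cases "arm_excess T = 0")
  case True
  then show ?thesis
    using assms by (simp add: uncrowd_bump_def)
next
  case False
  obtain la where "is_HVT_shape la T"
    using assms unfolding is_HVT_def by blast
  then interpret armed_cell T la "bump_row T (bump_col T)" "bump_col T"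
    "the (T (bump_row T (bump_col T), bump_col T))"
    using False by (rule armed_cell_bump_position)
  show ?thesis
    using bump_at_is_HVT False by (simp add: uncrowd_bump_eq_bump_at)
qed

end
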